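(* Let $H$ be a separable complex Hilbert space, $\{v_j\}_{j\in\mathbb N}$ an orthonormal basis of $H$, $\{w_j\}_{j\in\mathbb N}$ a set of unit vectors in $H$, and $N\ge1$. Let $p_N'$ be the orthogonal projection onto $H_N'=\operatorname{span}\{v_1,\dots,v_N\}$, let $\mathcal B_N=\{w_j\}_{1\le j\le N}\cup\{v_j\}_{j\ge N+1}$ and $\tilde{\mathcal B}_N=\{p_N'(w_1),\dots,p_N'(w_N)\}\cup\{v_j\}_{j\ge N+1}$. Then $\mathcal B_N$ is a Riesz basis of $H$ if and only if $\tilde{\mathcal B}_N$ is a Riesz basis of $H$.
   Context: A Riesz basis is a sequence $\{u_j\}$ such that there are $0<A\le B<\infty$ with $A\|f\|^2\le\sum_j|\langle f,u_j\rangle|^2\le B\|f\|^2$ for all $f\in H$ and $A\sum|a_j|^2\le\|\sum a_ju_j\|^2\le B\sum|a_j|^2$ for all finite coefficient sequences. *)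

theory Defs
  imports "HOL-Analysis.Analysis"
begin

class complex_vector = real_vector +
  fixes scaleC :: "complex \<Rightarrow> 'a \<Rightarrow> 'a" (infixr "*\<^sub>C" 75)
  assumes scaleC_add_right: "a *\<^sub>C (x + y) = a *\<^sub>C x + a *\<^sub>C y"
    and scaleC_add_left: "(a + b) *\<^sub>C x = a *\<^sub>C x + b *\<^sub>C x"
    and scaleC_scaleC: "a *\<^sub>C (b *\<^sub>C x) = (a * b) *\<^sub>C x"
    and scaleC_one: "1 *\<^sub>C x = x"
    and scaleR_scaleC: "scaleR r x = complex_of_real r *\<^sub>C x"

class complex_inner = complex_vector + real_normed_vector +
  fixes cinner :: "'a \<Rightarrow> 'a \<Rightarrow> complex"
  assumes cinner_conj: "cinner x y = cnj (cinner y x)"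
    and cinner_add_right: "cinner x (y + z) = cinner x y + cinner x z"
    and cinner_scaleC_right: "cinner x (a *\<^sub>C y) = a * cinner x y"
    and cinner_ge_zero: "0 \<le> Re (cinner x x)"
    and cinner_eq_zero_iff: "cinner x x = 0 \<longleftrightarrow> x = 0"
    and norm_eq_sqrt_cinner: "norm x = sqrt (Re (cinner x x))"

class chilbert_space = complex_inner + complete_space

definition cspan :: "'a::complex_vector set \<Rightarrow> 'a set" where
  "cspan S = {\<Sum>x\<in>F. c x *\<^sub>C x | F c. finite F \<and> F \<subseteq> S}"

definition orthonormal_basis :: "(nat \<Rightarrow> 'a::complex_inner) \<Rightarrow> bool" where
  "orthonormal_basis v \<longleftrightarrow>
     (\<forall>i j. cinner (v i) (v j) = (if i = j then 1 else 0)) \<and>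
     closure (cspan (range v)) = UNIV"

definition orth_proj :: "'a::complex_inner set \<Rightarrow> 'a \<Rightarrow> 'a" where
  "orth_proj M x = (THE y. y \<in> M \<and> (\<forall>z\<in>M. cinner z (x - y) = 0))"

definition riesz_basis :: "(nat \<Rightarrow> 'a::complex_inner) \<Rightarrow> bool" where
  "riesz_basis u \<longleftrightarrow> (\<exists>A B. 0 < A \<and> A \<le> B \<and>
     (\<forall>f. summable (\<lambda>j. (cmod (cinner f (u j)))\<^sup>2) \<and>
          A * (norm f)\<^sup>2 \<le> (\<Sum>j. (cmod (cinner f (u j)))\<^sup>2) \<and>
          (\<Sum>j. (cmod (cinner f (u j)))\<^sup>2) \<le> B * (norm f)\<^sup>2) \<and>
     (\<forall>F a. finite F \<longrightarrow>
          A * (\<Sum>j\<in>F. (cmod (a j))\<^sup>2) \<le> (norm (\<Sum>j\<in>F. a j *\<^sub>C u j))\<^sup>2 \<and>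
          (norm (\<Sum>j\<in>F. a j *\<^sub>C u j))\<^sup>2 \<le> B * (\<Sum>j\<in>F. (cmod (a j))\<^sup>2)))"

end

(*
  Write u for the family that agrees with the orthonormal basis v from index N on and with x
  below N. Then u is a Riesz basis if and only if the N x N matrix G k j = <v k, x j> is
  invertible. If G a = 0, the vector y = sum a j x j is orthogonal to v 0, ..., v (N - 1), so
  for K \<ge> N the residual of y after its first K Fourier terms is a finite combination of the u j
  whose first N coefficients are a; as these residuals tend to 0, the lower Riesz bound forces
  a = 0. Conversely, an inverse of G controls the first N coefficients of a combination, and
  the first N Fourier coefficients of a vector, through Bessel's inequality, while the remaining
  vectors are orthonormal. The projection onto span (v 0, ..., v (N - 1)) leaves every <v k, w j>
  with k < N unchanged, so both families in the theorem have the same matrix G.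
*)

theory Submission
  imports Defs "Jordan_Normal_Form.Determinant"
begin

lemma scaleC_zero_left [simp]: "(0::complex) *\<^sub>C x = (0::'a::complex_vector)"
proof -
  have "(0::complex) *\<^sub>C x = 0 *\<^sub>C x + 0 *\<^sub>C x"
    by (metis add_0 scaleC_add_left)
  then show ?thesis by simp
qed

lemma scaleC_minus_left: "(- a) *\<^sub>C x = - (a *\<^sub>C (x::'a::complex_vector))"
proof -
  have "(- a) *\<^sub>C x + a *\<^sub>C x = 0" by (simp flip: scaleC_add_left)
  then show ?thesis by (simp add: eq_neg_iff_add_eq_0)
qed

lemma cinner_add_left: "cinner (x + y) z = cinner x z + cinner y (z::'a::complex_inner)"
  by (metis cinner_conj cinner_add_right complex_cnj_add)

lemma cinner_scaleC_left: "cinner (a *\<^sub>C x) y = cnj a * cinner x (y::'a::complex_inner)"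
  by (metis cinner_conj cinner_scaleC_right complex_cnj_mult)

lemma cinner_zero_right [simp]: "cinner x (0::'a::complex_inner) = 0"
  using cinner_scaleC_right[of x 0 0] by simp

lemma cinner_zero_left [simp]: "cinner (0::'a::complex_inner) x = 0"
  using cinner_scaleC_left[of 0 0 x] by simp

lemma cinner_minus_right: "cinner x (- y) = - cinner x (y::'a::complex_inner)"
  using cinner_add_right[of x y "-y"] by (simp add: add_eq_0_iff)

lemma cinner_minus_left: "cinner (- x) y = - cinner x (y::'a::complex_inner)"
  using cinner_add_left[of x "-x" y] by (simp add: add_eq_0_iff)

lemma cinner_diff_right: "cinner x (y - z) = cinner x y - cinner x (z::'a::complex_inner)"
  by (simp only: diff_conv_add_uminus cinner_add_right cinner_minus_right)

lemma cinner_diff_left: "cinner (x - y) z = cinner x z - cinner y (z::'a::complex_inner)"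
  by (simp only: diff_conv_add_uminus cinner_add_left cinner_minus_left)

lemma cinner_sum_right: "cinner x (\<Sum>i\<in>F. f i) = (\<Sum>i\<in>F. cinner x (f i::'a::complex_inner))"
  by (induction F rule: infinite_finite_induct) (auto simp: cinner_add_right)

lemma cinner_sum_left: "cinner (\<Sum>i\<in>F. f i) x = (\<Sum>i\<in>F. cinner (f i::'a::complex_inner) x)"
  by (induction F rule: infinite_finite_induct) (auto simp: cinner_add_left)

lemma cinner_eq_zero_sym: "cinner x y = 0 \<longleftrightarrow> cinner y (x::'a::complex_inner) = 0"
  by (metis cinner_conj complex_cnj_zero)

lemma cinner_self: "cinner x x = complex_of_real ((norm (x::'a::complex_inner))\<^sup>2)"
proof -
  have "Im (cinner x x) = 0"
    using arg_cong[OF cinner_conj[of x x], of Im] by simp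
  moreover have "(norm x)\<^sup>2 = Re (cinner x x)"
    using norm_eq_sqrt_cinner[of x] cinner_ge_zero[of x] by simp
  ultimately show ?thesis by (simp add: complex_eq_iff)
qed

lemma norm_sq_eq_Re_cinner: "(norm x)\<^sup>2 = Re (cinner x (x::'a::complex_inner))"
  by (simp add: cinner_self)

lemma norm_add_sq_cinner:
  "(norm (x + y))\<^sup>2 = (norm x)\<^sup>2 + (norm y)\<^sup>2 + 2 * Re (cinner x (y::'a::complex_inner))"
proof -
  have "Re (cinner y x) = Re (cinner x y)"
    using cinner_conj[of y x] by simp
  then show ?thesis
    by (simp add: norm_sq_eq_Re_cinner cinner_add_left cinner_add_right)
qed

lemma pythagoras_cinner:
  assumes "cinner x y = 0"
  shows "(norm (x + y))\<^sup>2 = (norm x)\<^sup>2 + (norm (y::'a::complex_inner))\<^sup>2"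
  using assms by (simp add: norm_add_sq_cinner)

lemma norm_scaleC: "norm (a *\<^sub>C x) = cmod a * norm (x::'a::complex_inner)"
proof -
  have "cinner (a *\<^sub>C x) (a *\<^sub>C x) = (cnj a * a) * cinner x x"
    by (simp add: cinner_scaleC_left cinner_scaleC_right mult.assoc)
  also have "cnj a * a = complex_of_real ((cmod a)\<^sup>2)"
    using complex_norm_square[of a] by (simp add: mult.commute)
  finally have "complex_of_real ((norm (a *\<^sub>C x))\<^sup>2) = complex_of_real ((cmod a)\<^sup>2 * (norm x)\<^sup>2)"
    unfolding cinner_self by simp
  then have "(norm (a *\<^sub>C x))\<^sup>2 = (cmod a * norm x)\<^sup>2"
    unfolding of_real_eq_iff by (simp add: power_mult_distrib)
  then show ?thesis by (simp add: power2_eq_iff_nonneg)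
qed

lemma cauchy_schwarz_cinner: "cmod (cinner x y) \<le> norm x * norm (y::'a::complex_inner)"
proof (cases "y = 0")
  case True
  then show ?thesis by simp
next
  case False
  then have ny: "norm y > 0" by simp
  define t where "t = cinner y x / complex_of_real ((norm y)\<^sup>2)"
  define z where "z = x - t *\<^sub>C y"
  have "cinner y z = 0"
    using ny by (simp add: z_def t_def cinner_diff_right cinner_scaleC_right cinner_self)
  then have "(norm (z + t *\<^sub>C y))\<^sup>2 = (norm z)\<^sup>2 + (norm (t *\<^sub>C y))\<^sup>2"
    using cinner_conj[of z y] by (simp add: norm_add_sq_cinner cinner_scaleC_right)
  then have le_norm_x: "(norm x)\<^sup>2 \<ge> (cmod t * norm y)\<^sup>2"
    by (simp add: z_def norm_scaleC)
  have "cmod t = cmod (cinner y x) / (norm y)\<^sup>2"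
    unfolding t_def norm_divide norm_of_real by simp
  then have cmod_t: "cmod t * norm y = cmod (cinner y x) / norm y"
    using ny by (simp add: power2_eq_square)
  have cmod_sym: "cmod (cinner y x) = cmod (cinner x y)"
    by (metis cinner_conj complex_mod_cnj)
  from le_norm_x cmod_t cmod_sym have "(cmod (cinner x y) / norm y)\<^sup>2 \<le> (norm x)\<^sup>2"
    by simp
  then have "cmod (cinner x y) / norm y \<le> norm x"
    using power2_le_imp_le by fastforce
  then show ?thesis
    using ny by (simp add: divide_le_eq mult.commute)
qed

lemma cauchy_schwarz_cinner_sq: "(cmod (cinner x y))\<^sup>2 \<le> (norm x)\<^sup>2 * (norm (y::'a::complex_inner))\<^sup>2"
  using power_mono[OF cauchy_schwarz_cinner[of x y], of 2] by (simp add: power_mult_distrib)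

lemma norm_sum_scaleC_sq_le:
  "(norm (\<Sum>j\<in>F. a j *\<^sub>C x j))\<^sup>2 \<le> (\<Sum>j\<in>F. (cmod (a j))\<^sup>2) * (\<Sum>j\<in>F. (norm (x j::'a::complex_inner))\<^sup>2)"
proof -
  have "norm (\<Sum>j\<in>F. a j *\<^sub>C x j) \<le> (\<Sum>j\<in>F. cmod (a j) * norm (x j))"
    using norm_sum[of "\<lambda>j. a j *\<^sub>C x j" F] by (simp add: norm_scaleC)
  then have "(norm (\<Sum>j\<in>F. a j *\<^sub>C x j))\<^sup>2 \<le> (\<Sum>j\<in>F. cmod (a j) * norm (x j))\<^sup>2"
    by (simp add: power_mono)
  also have "\<dots> \<le> (\<Sum>j\<in>F. (cmod (a j))\<^sup>2) * (\<Sum>j\<in>F. (norm (x j))\<^sup>2)"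
    by (rule Cauchy_Schwarz_ineq_sum)
  finally show ?thesis .
qed

lemma norm_add_sq_le: "(norm (x + y))\<^sup>2 \<le> 2 * (norm x)\<^sup>2 + 2 * (norm (y::'a::real_normed_vector))\<^sup>2"
proof -
  have "(norm (x + y))\<^sup>2 \<le> (norm x + norm y)\<^sup>2"
    by (simp add: norm_triangle_ineq power_mono)
  also have "\<dots> \<le> 2 * (norm x)\<^sup>2 + 2 * (norm y)\<^sup>2"
    using zero_le_power2[of "norm x - norm y"] by (simp add: power2_sum power2_diff)
  finally show ?thesis .
qed

lemma norm_diff_sq_le: "(norm (x - y))\<^sup>2 \<le> 2 * (norm x)\<^sup>2 + 2 * (norm (y::'a::real_normed_vector))\<^sup>2"
  using norm_add_sq_le[of x "- y"] by simp

definition orthonormal_seq :: "(nat \<Rightarrow> 'a::complex_inner) \<Rightarrow> bool" where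
  "orthonormal_seq v \<longleftrightarrow> (\<forall>i j. cinner (v i) (v j) = (if i = j then 1 else 0))"

definition proj_span :: "(nat \<Rightarrow> 'a::complex_inner) \<Rightarrow> nat set \<Rightarrow> 'a \<Rightarrow> 'a" where
  "proj_span v I x = (\<Sum>k\<in>I. cinner (v k) x *\<^sub>C v k)"

lemma orthonormal_basis_imp_orthonormal_seq: "orthonormal_basis v \<Longrightarrow> orthonormal_seq v"
  unfolding orthonormal_basis_def orthonormal_seq_def by blast

lemma orthonormal_seq_inj: "orthonormal_seq v \<Longrightarrow> inj v"
  unfolding orthonormal_seq_def inj_def by (metis zero_neq_one)

lemma cinner_orthonormal_combination:
  assumes "orthonormal_seq v" "finite F"
  shows "cinner (v k) (\<Sum>j\<in>F. c j *\<^sub>C v j) = (if k \<in> F then c k else 0)"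
proof -
  have "cinner (v k) (\<Sum>j\<in>F. c j *\<^sub>C v j) = (\<Sum>j\<in>F. if k = j then c j else 0)"
    using assms(1) unfolding orthonormal_seq_def
    by (intro trans[OF cinner_sum_right sum.cong]) (simp_all add: cinner_scaleC_right)
  then show ?thesis
    using assms(2) by (simp add: sum.delta)
qed

lemma norm_orthonormal_combination_sq:
  assumes "orthonormal_seq v" "finite F"
  shows "(norm (\<Sum>j\<in>F. c j *\<^sub>C v j))\<^sup>2 = (\<Sum>j\<in>F. (cmod (c j))\<^sup>2)"
proof -
  let ?s = "\<Sum>j\<in>F. c j *\<^sub>C v j"
  have "cinner ?s ?s = (\<Sum>j\<in>F. cnj (c j) * cinner (v j) ?s)"
    by (simp add: cinner_sum_left cinner_scaleC_left)
  also have "\<dots> = (\<Sum>j\<in>F. complex_of_real ((cmod (c j))\<^sup>2))"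
    using assms complex_norm_square
    by (intro sum.cong) (auto simp: cinner_orthonormal_combination mult.commute)
  finally show ?thesis
    by (simp add: norm_sq_eq_Re_cinner Re_sum)
qed

lemma cinner_cspan_eq_zero:
  assumes "z \<in> cspan S" "\<And>s. s \<in> S \<Longrightarrow> cinner s y = 0"
  shows "cinner z y = 0"
proof -
  obtain F c where "F \<subseteq> S" "z = (\<Sum>s\<in>F. c s *\<^sub>C s)"
    using assms(1) unfolding cspan_def by blast
  then show ?thesis
    using assms(2) by (auto simp: cinner_sum_left cinner_scaleC_left intro!: sum.neutral)
qed

lemma cspan_mono: "S \<subseteq> T \<Longrightarrow> cspan S \<subseteq> cspan T"
  unfolding cspan_def by blast

lemma proj_span_in_cspan:
  assumes "orthonormal_seq v" "finite I"
  shows "proj_span v I x \<in> cspan (v ` I)"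
proof -
  have "inj_on v I"
    using orthonormal_seq_inj[OF assms(1)] by (rule inj_on_subset) simp
  then have "proj_span v I x = (\<Sum>s\<in>v ` I. cinner s x *\<^sub>C s)"
    by (simp add: proj_span_def sum.reindex)
  then show ?thesis
    unfolding cspan_def using assms(2)
    by (intro CollectI exI[of _ "v ` I"] exI[of _ "\<lambda>s. cinner s x"]) auto
qed

lemma cinner_proj_span:
  assumes "orthonormal_seq v" "finite I" "k \<in> I"
  shows "cinner (v k) (proj_span v I x) = cinner (v k) x"
  using cinner_orthonormal_combination[OF assms(1,2), of k "\<lambda>k. cinner (v k) x"] assms(3)
  by (simp add: proj_span_def)

lemma residual_orthogonal_cspan:
  assumes "orthonormal_seq v" "finite I" "z \<in> cspan (v ` I)"
  shows "cinner z (x - proj_span v I x) = 0"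
  using assms(3)
proof (rule cinner_cspan_eq_zero)
  fix s assume "s \<in> v ` I"
  then obtain k where "k \<in> I" "s = v k" by blast
  then show "cinner s (x - proj_span v I x) = 0"
    using cinner_proj_span[OF assms(1,2)] by (simp add: cinner_diff_right)
qed

lemma norm_residual_proj_span_sq:
  assumes "orthonormal_seq v" "finite I"
  shows "(norm (x - proj_span v I x))\<^sup>2 = (norm x)\<^sup>2 - (\<Sum>k\<in>I. (cmod (cinner (v k) x))\<^sup>2)"
proof -
  let ?p = "proj_span v I x"
  have "cinner (x - ?p) ?p = 0"
    using residual_orthogonal_cspan[OF assms proj_span_in_cspan[OF assms]] cinner_eq_zero_sym
    by blast
  then have "(norm ((x - ?p) + ?p))\<^sup>2 = (norm (x - ?p))\<^sup>2 + (norm ?p)\<^sup>2"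
    by (rule pythagoras_cinner)
  moreover have "(norm ?p)\<^sup>2 = (\<Sum>k\<in>I. (cmod (cinner (v k) x))\<^sup>2)"
    unfolding proj_span_def by (rule norm_orthonormal_combination_sq[OF assms])
  ultimately show ?thesis by simp
qed

lemma bessel_inequality:
  assumes "orthonormal_seq v" "finite I"
  shows "(\<Sum>k\<in>I. (cmod (cinner (v k) x))\<^sup>2) \<le> (norm x)\<^sup>2"
  using norm_residual_proj_span_sq[OF assms, of x] zero_le_power2[of "norm (x - proj_span v I x)"]
  by linarith

lemma proj_span_best_approximation:
  assumes "orthonormal_seq v" "finite I" "z \<in> cspan (v ` I)"
  shows "norm (x - proj_span v I x) \<le> norm (x - z)"
proof -
  let ?p = "proj_span v I x"
  have "cinner (?p - z) (x - ?p) = 0"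
    using residual_orthogonal_cspan[OF assms(1,2)] proj_span_in_cspan[OF assms(1,2)] assms(3)
    by (simp add: cinner_diff_left)
  then have "cinner (x - ?p) (?p - z) = 0"
    using cinner_eq_zero_sym by blast
  then have "(norm ((x - ?p) + (?p - z)))\<^sup>2 = (norm (x - ?p))\<^sup>2 + (norm (?p - z))\<^sup>2"
    by (rule pythagoras_cinner)
  moreover have "(x - ?p) + (?p - z) = x - z"
    by (simp add: algebra_simps)
  ultimately have "(norm (x - z))\<^sup>2 = (norm (x - ?p))\<^sup>2 + (norm (?p - z))\<^sup>2"
    by (simp only:)
  then have "(norm (x - ?p))\<^sup>2 \<le> (norm (x - z))\<^sup>2"
    using zero_le_power2[of "norm (?p - z)"] by linarith
  then show ?thesis
    by (rule power2_le_imp_le) simp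
qed

lemma orth_proj_eq_proj_span:
  assumes "orthonormal_seq v" "finite I"
  shows "orth_proj (cspan (v ` I)) x = proj_span v I x"
  unfolding orth_proj_def
proof (rule the_equality)
  let ?M = "cspan (v ` I)" and ?p = "proj_span v I x"
  show "?p \<in> ?M \<and> (\<forall>z\<in>?M. cinner z (x - ?p) = 0)"
    using proj_span_in_cspan[OF assms] residual_orthogonal_cspan[OF assms] by blast
  fix y assume y: "y \<in> ?M \<and> (\<forall>z\<in>?M. cinner z (x - y) = 0)"
  have orth: "cinner z (?p - y) = 0" if "z \<in> ?M" for z
  proof -
    have "cinner z (?p - y) = cinner z (x - y) - cinner z (x - ?p)"
      by (simp add: cinner_diff_right)
    then show ?thesis
      using y residual_orthogonal_cspan[OF assms that] that by simp
  qed
  have "cinner (?p - y) (?p - y) = cinner ?p (?p - y) - cinner y (?p - y)"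
    by (rule cinner_diff_left)
  also have "\<dots> = 0"
    using orth[OF proj_span_in_cspan[OF assms]] orth[of y] y by simp
  finally show "y = ?p"
    using cinner_eq_zero_iff[of "?p - y"] by simp
qed

lemma residual_proj_span_tendsto_zero:
  assumes "orthonormal_basis v"
  shows "(\<lambda>K. norm (x - proj_span v {..<K} x)) \<longlonglongrightarrow> 0"
proof (rule LIMSEQ_I)
  fix e :: real assume "0 < e"
  have "x \<in> closure (cspan (range v))"
    using assms unfolding orthonormal_basis_def by simp
  then obtain y where y: "y \<in> cspan (range v)" and "dist y x < e"
    using \<open>0 < e\<close> unfolding closure_approachable by blast
  then obtain F c where F: "finite F" "F \<subseteq> range v" and y_eq: "y = (\<Sum>s\<in>F. c s *\<^sub>C s)"
    unfolding cspan_def by blast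
  obtain I where I: "F = v ` I" "finite I"
    using finite_subset_image[OF F] by blast
  obtain K0 where "I \<subseteq> {..<K0}"
    using finite_nat_bounded[OF I(2)] by blast
  then have "F \<subseteq> v ` {..<K0}"
    using I(1) by blast
  then have y_K0: "y \<in> cspan (v ` {..<K0})"
    unfolding cspan_def using F(1) y_eq by (intro CollectI exI[of _ F] exI[of _ c]) simp
  show "\<exists>K0. \<forall>K\<ge>K0. norm (norm (x - proj_span v {..<K} x) - 0) < e"
  proof (intro exI allI impI)
    fix K assume "K0 \<le> K"
    then have "v ` {..<K0} \<subseteq> v ` {..<K}"
      by auto
    then have "y \<in> cspan (v ` {..<K})"
      using y_K0 cspan_mono by blast
    then have "norm (x - proj_span v {..<K} x) \<le> norm (x - y)"
      by (rule proj_span_best_approximation[OF orthonormal_basis_imp_orthonormal_seq[OF assms]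
            finite_lessThan])
    also have "\<dots> < e"
      using \<open>dist y x < e\<close> by (simp add: dist_norm norm_minus_commute)
    finally show "norm (norm (x - proj_span v {..<K} x) - 0) < e"
      by simp
  qed
qed

lemma parseval_identity:
  assumes "orthonormal_basis v"
  shows "(\<lambda>k. (cmod (cinner (v k) x))\<^sup>2) sums (norm x)\<^sup>2"
proof -
  have "(\<lambda>K. (norm x)\<^sup>2 - (norm (x - proj_span v {..<K} x))\<^sup>2) \<longlonglongrightarrow> (norm x)\<^sup>2 - 0\<^sup>2"
    by (intro tendsto_intros residual_proj_span_tendsto_zero[OF assms])
  moreover have "(norm x)\<^sup>2 - (norm (x - proj_span v {..<K} x))\<^sup>2 = (\<Sum>k<K. (cmod (cinner (v k) x))\<^sup>2)"
    for K
    using norm_residual_proj_span_sq[OF orthonormal_basis_imp_orthonormal_seq[OF assms]] by simp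
  ultimately show ?thesis
    unfolding sums_def by simp
qed

lemma square_matrix_inverse_exists:
  fixes G :: "nat \<Rightarrow> nat \<Rightarrow> 'a::field"
  assumes inj: "\<And>a. \<forall>k<N. (\<Sum>j<N. G k j * a j) = 0 \<Longrightarrow> \<forall>j<N. a j = 0"
  shows "\<exists>H. (\<forall>i<N. \<forall>j<N. (\<Sum>k<N. H i k * G k j) = (if i = j then 1 else 0)) \<and>
             (\<forall>i<N. \<forall>j<N. (\<Sum>k<N. G i k * H k j) = (if i = j then 1 else 0))"
proof -
  define A where "A = mat N N (\<lambda>(i, j). G i j)"
  have A: "A \<in> carrier_mat N N"
    by (simp add: A_def)
  have "det A \<noteq> 0"
  proof
    assume "det A = 0"
    then obtain w where w: "w \<in> carrier_vec N" "w \<noteq> 0\<^sub>v N" "A *\<^sub>v w = 0\<^sub>v N"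
      using det_0_iff_vec_prod_zero_field[OF A] by blast
    have "\<forall>k<N. (\<Sum>j<N. G k j * w $ j) = 0"
    proof (intro allI impI)
      fix k assume "k < N"
      then have "(A *\<^sub>v w) $ k = 0"
        using w(3) by simp
      then show "(\<Sum>j<N. G k j * w $ j) = 0"
        using \<open>k < N\<close> w(1) by (simp add: A_def scalar_prod_def lessThan_atLeast0 row_def)
    qed
    then have "w = 0\<^sub>v N"
      using inj w(1) by (intro eq_vecI) auto
    with w(2) show False ..
  qed
  then obtain B where B: "B \<in> carrier_mat N N" "B * A = 1\<^sub>m N" "A * B = 1\<^sub>m N"
    using det_non_zero_imp_unit[OF A, of "()"] unfolding Units_def ring_mat_def by auto
  show ?thesis
  proof (intro exI[of _ "\<lambda>i k. B $$ (i, k)"] conjI allI impI)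
    fix i j assume "i < N" "j < N"
    then show "(\<Sum>k<N. B $$ (i, k) * G k j) = (if i = j then 1 else 0)"
      using arg_cong[OF B(2), of "\<lambda>M. M $$ (i, j)"] B(1)
      by (simp add: A_def scalar_prod_def lessThan_atLeast0 row_def col_def)
    show "(\<Sum>k<N. G i k * B $$ (k, j)) = (if i = j then 1 else 0)"
      using \<open>i < N\<close> \<open>j < N\<close> arg_cong[OF B(3), of "\<lambda>M. M $$ (i, j)"] B(1)
      by (simp add: A_def scalar_prod_def lessThan_atLeast0 row_def col_def)
  qed
qed

lemma left_inverse_bounded_below:
  fixes G H :: "nat \<Rightarrow> nat \<Rightarrow> complex"
  assumes "\<forall>i<N. \<forall>j<N. (\<Sum>k<N. H i k * G k j) = (if i = j then 1 else 0)"
  shows "(\<Sum>i<N. (cmod (a i))\<^sup>2)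
    \<le> (\<Sum>i<N. \<Sum>k<N. (cmod (H i k))\<^sup>2) * (\<Sum>k<N. (cmod (\<Sum>j<N. G k j * a j))\<^sup>2)"
proof -
  define y where "y k = (\<Sum>j<N. G k j * a j)" for k
  have a_eq: "a i = (\<Sum>k<N. H i k * y k)" if "i < N" for i
  proof -
    have "(\<Sum>k<N. H i k * y k) = (\<Sum>j<N. (\<Sum>k<N. H i k * G k j) * a j)"
      unfolding y_def sum_distrib_left sum_distrib_right
      by (subst sum.swap) (simp add: mult.assoc)
    also have "\<dots> = (\<Sum>j<N. if i = j then a j else 0)"
      using assms that by (intro sum.cong) auto
    finally show ?thesis
      using that by simp
  qed
  have "(cmod (a i))\<^sup>2 \<le> (\<Sum>k<N. (cmod (H i k))\<^sup>2) * (\<Sum>k<N. (cmod (y k))\<^sup>2)" if "i < N" for i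
  proof -
    have "cmod (a i) \<le> (\<Sum>k<N. cmod (H i k * y k))"
      unfolding a_eq[OF that] by (rule norm_sum)
    then have "cmod (a i) \<le> (\<Sum>k<N. cmod (H i k) * cmod (y k))"
      by (simp add: norm_mult)
    then have "(cmod (a i))\<^sup>2 \<le> (\<Sum>k<N. cmod (H i k) * cmod (y k))\<^sup>2"
      by (simp add: power_mono)
    also have "\<dots> \<le> (\<Sum>k<N. (cmod (H i k))\<^sup>2) * (\<Sum>k<N. (cmod (y k))\<^sup>2)"
      by (rule Cauchy_Schwarz_ineq_sum)
    finally show ?thesis .
  qed
  then have "(\<Sum>i<N. (cmod (a i))\<^sup>2) \<le> (\<Sum>i<N. (\<Sum>k<N. (cmod (H i k))\<^sup>2) * (\<Sum>k<N. (cmod (y k))\<^sup>2))"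
    by (intro sum_mono) simp
  then show ?thesis
    by (simp add: y_def sum_distrib_right)
qed

lemma sum_split_lessThan:
  fixes N :: nat
  assumes "finite F"
  shows "sum g F = (\<Sum>j<N. if j \<in> F then g j else 0) + sum g (F - {..<N})"
proof -
  have "sum g (F \<inter> {..<N}) = sum g ({..<N} \<inter> F)"
    by (simp only: Int_commute)
  also have "\<dots> = (\<Sum>j<N. if j \<in> F then g j else 0)"
    by (rule sum.inter_restrict) simp
  finally show ?thesis
    using sum.Int_Diff[OF assms, of g "{..<N}"] by simp
qed

lemma riesz_basisI:
  assumes "0 < C"
    and "\<And>f. summable (\<lambda>j. (cmod (cinner f (u j)))\<^sup>2)"
    and "\<And>f. (norm f)\<^sup>2 \<le> C * (\<Sum>j. (cmod (cinner f (u j)))\<^sup>2)"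
    and "\<And>f. (\<Sum>j. (cmod (cinner f (u j)))\<^sup>2) \<le> B * (norm f)\<^sup>2"
    and "\<And>F a. finite F \<Longrightarrow> (\<Sum>j\<in>F. (cmod (a j))\<^sup>2) \<le> C * (norm (\<Sum>j\<in>F. a j *\<^sub>C u j))\<^sup>2"
    and "\<And>F a. finite F \<Longrightarrow> (norm (\<Sum>j\<in>F. a j *\<^sub>C u j))\<^sup>2 \<le> B * (\<Sum>j\<in>F. (cmod (a j))\<^sup>2)"
  shows "riesz_basis (u :: nat \<Rightarrow> 'a::complex_inner)"
  unfolding riesz_basis_def
proof (rule exI[of _ "1 / C"], rule exI[of _ B], intro conjI allI impI)
  show "0 < 1 / C"
    using assms(1) by simp
  \<comment> \<open>The synthesis bounds for the single coefficient 1 at index 0 force 1/C \<le> B.\<close>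
  have "1 \<le> C * (norm (u 0))\<^sup>2" "(norm (u 0))\<^sup>2 \<le> B"
    using assms(5,6)[of "{0}" "\<lambda>_. 1"] by (simp_all add: scaleC_one)
  then have "1 \<le> C * B"
    using assms(1) by (meson less_imp_le mult_left_mono order_trans)
  then show "1 / C \<le> B"
    using assms(1) by (simp add: divide_le_eq mult.commute)
  fix f
  show "summable (\<lambda>j. (cmod (cinner f (u j)))\<^sup>2)"
    by (rule assms(2))
  show "1 / C * (norm f)\<^sup>2 \<le> (\<Sum>j. (cmod (cinner f (u j)))\<^sup>2)"
    using assms(1,3) by (simp add: field_simps)
  show "(\<Sum>j. (cmod (cinner f (u j)))\<^sup>2) \<le> B * (norm f)\<^sup>2"
    by (rule assms(4))
next
  fix F :: "nat set" and a :: "nat \<Rightarrow> complex"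
  assume "finite F"
  then show "1 / C * (\<Sum>j\<in>F. (cmod (a j))\<^sup>2) \<le> (norm (\<Sum>j\<in>F. a j *\<^sub>C u j))\<^sup>2"
    using assms(1,5) by (simp add: field_simps)
  show "(norm (\<Sum>j\<in>F. a j *\<^sub>C u j))\<^sup>2 \<le> B * (\<Sum>j\<in>F. (cmod (a j))\<^sup>2)"
    using \<open>finite F\<close> by (rule assms(6))
qed

locale onb_head_replacement =
  fixes v x :: "nat \<Rightarrow> 'a::complex_inner" and N :: nat
  assumes onb: "orthonormal_basis v"
begin

definition replaced :: "nat \<Rightarrow> 'a" where
  "replaced j = (if j < N then x j else v j)"

definition coeff_matrix :: "nat \<Rightarrow> nat \<Rightarrow> complex" where
  "coeff_matrix k j = cinner (v k) (x j)"

definition head_norm_sq :: real where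
  "head_norm_sq = (\<Sum>j<N. (norm (x j))\<^sup>2)"

lemma orthonormal: "orthonormal_seq v"
  using onb by (rule orthonormal_basis_imp_orthonormal_seq)

lemma head_norm_sq_nonneg: "0 \<le> head_norm_sq"
  unfolding head_norm_sq_def by (simp add: sum_nonneg)

lemma synthesis_decomposition:
  assumes "finite F"
  obtains b z1 z2 where
    "(\<Sum>j\<in>F. a j *\<^sub>C replaced j) = z1 + z2"
    "(\<Sum>j\<in>F. (cmod (a j))\<^sup>2) = (\<Sum>j<N. (cmod (b j))\<^sup>2) + (norm z2)\<^sup>2"
    "(norm z1)\<^sup>2 \<le> head_norm_sq * (\<Sum>j<N. (cmod (b j))\<^sup>2)"
    "\<And>k. k < N \<Longrightarrow> cinner (v k) (z1 + z2) = (\<Sum>j<N. coeff_matrix k j * b j)"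
proof
  define b where "b j = (if j \<in> F then a j else 0)" for j
  let ?z1 = "\<Sum>j<N. b j *\<^sub>C x j" and ?z2 = "\<Sum>j\<in>F - {..<N}. a j *\<^sub>C v j"
  have "(\<Sum>j<N. if j \<in> F then a j *\<^sub>C replaced j else 0) = ?z1"
    by (intro sum.cong) (simp_all add: b_def replaced_def)
  moreover have "(\<Sum>j\<in>F - {..<N}. a j *\<^sub>C replaced j) = ?z2"
    by (intro sum.cong) (simp_all add: replaced_def)
  ultimately show "(\<Sum>j\<in>F. a j *\<^sub>C replaced j) = ?z1 + ?z2"
    using sum_split_lessThan[OF assms, of _ N] by metis
  have "(\<Sum>j<N. if j \<in> F then (cmod (a j))\<^sup>2 else 0) = (\<Sum>j<N. (cmod (b j))\<^sup>2)"
    by (intro sum.cong) (simp_all add: b_def)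
  moreover have "(norm ?z2)\<^sup>2 = (\<Sum>j\<in>F - {..<N}. (cmod (a j))\<^sup>2)"
    using assms by (intro norm_orthonormal_combination_sq orthonormal) simp
  ultimately show "(\<Sum>j\<in>F. (cmod (a j))\<^sup>2) = (\<Sum>j<N. (cmod (b j))\<^sup>2) + (norm ?z2)\<^sup>2"
    using sum_split_lessThan[OF assms, of _ N] by metis
  show "(norm ?z1)\<^sup>2 \<le> head_norm_sq * (\<Sum>j<N. (cmod (b j))\<^sup>2)"
    using norm_sum_scaleC_sq_le[of b x "{..<N}"] by (simp add: head_norm_sq_def mult.commute)
  fix k assume "k < N"
  then have "cinner (v k) ?z2 = 0"
    using assms cinner_orthonormal_combination[OF orthonormal, of "F - {..<N}" k a] by simp
  then show "cinner (v k) (?z1 + ?z2) = (\<Sum>j<N. coeff_matrix k j * b j)"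
    by (simp add: cinner_add_right cinner_sum_right cinner_scaleC_right coeff_matrix_def mult.commute)
qed

lemma synthesis_upper_bound:
  assumes "finite F"
  shows "(norm (\<Sum>j\<in>F. a j *\<^sub>C replaced j))\<^sup>2 \<le> 2 * (head_norm_sq + 1) * (\<Sum>j\<in>F. (cmod (a j))\<^sup>2)"
proof -
  obtain b z1 z2 where z: "(\<Sum>j\<in>F. a j *\<^sub>C replaced j) = z1 + z2"
    and sum_eq: "(\<Sum>j\<in>F. (cmod (a j))\<^sup>2) = (\<Sum>j<N. (cmod (b j))\<^sup>2) + (norm z2)\<^sup>2"
    and z1: "(norm z1)\<^sup>2 \<le> head_norm_sq * (\<Sum>j<N. (cmod (b j))\<^sup>2)"
    using synthesis_decomposition[OF assms] by blast
  let ?C = head_norm_sq and ?\<alpha> = "\<Sum>j<N. (cmod (b j))\<^sup>2" and ?\<beta> = "(norm z2)\<^sup>2"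
  have "2 * (?C + 1) * (?\<alpha> + ?\<beta>) = 2 * (?C * ?\<alpha>) + 2 * (?C * ?\<beta>) + 2 * ?\<alpha> + 2 * ?\<beta>"
    by (simp add: algebra_simps)
  moreover have "0 \<le> ?\<alpha>" "0 \<le> ?C * ?\<beta>"
    using head_norm_sq_nonneg by (simp_all add: sum_nonneg)
  ultimately show ?thesis
    using norm_add_sq_le[of z1 z2] z1 unfolding z sum_eq by linarith
qed

lemma analysis_sums:
  "(\<lambda>j. (cmod (cinner f (replaced j)))\<^sup>2)
     sums ((\<Sum>j<N. (cmod (cinner f (x j)))\<^sup>2) + (norm (f - proj_span v {..<N} f))\<^sup>2)"
proof -
  let ?p = "\<lambda>j. (cmod (cinner (v j) f))\<^sup>2" and ?q = "\<lambda>j. (cmod (cinner f (replaced j)))\<^sup>2"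
  have "?q j = ?p j + (if j \<in> {..<N} then ?q j - ?p j else 0)" for j
    using cinner_conj[of f "v j"] by (simp add: replaced_def)
  moreover have "(\<lambda>j. ?p j + (if j \<in> {..<N} then ?q j - ?p j else 0))
      sums ((norm f)\<^sup>2 + (\<Sum>j<N. ?q j - ?p j))"
    by (intro sums_add parseval_identity onb sums_If_finite_set) simp
  moreover have "(norm f)\<^sup>2 + (\<Sum>j<N. ?q j - ?p j)
      = (\<Sum>j<N. (cmod (cinner f (x j)))\<^sup>2) + (norm (f - proj_span v {..<N} f))\<^sup>2"
    by (simp add: norm_residual_proj_span_sq[OF orthonormal] sum_subtractf replaced_def)
  ultimately show ?thesis
    by simp
qed

lemma analysis_upper_bound:
  "(\<Sum>j. (cmod (cinner f (replaced j)))\<^sup>2) \<le> (head_norm_sq + 1) * (norm f)\<^sup>2"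
proof -
  have "(\<Sum>j<N. (cmod (cinner f (x j)))\<^sup>2) \<le> (\<Sum>j<N. (norm f)\<^sup>2 * (norm (x j))\<^sup>2)"
    by (intro sum_mono cauchy_schwarz_cinner_sq)
  also have "\<dots> = head_norm_sq * (norm f)\<^sup>2"
    by (simp add: head_norm_sq_def sum_distrib_left mult.commute)
  finally have "(\<Sum>j<N. (cmod (cinner f (x j)))\<^sup>2) \<le> head_norm_sq * (norm f)\<^sup>2" .
  moreover have "0 \<le> (\<Sum>k<N. (cmod (cinner (v k) f))\<^sup>2)"
    by (simp add: sum_nonneg)
  then have "(norm (f - proj_span v {..<N} f))\<^sup>2 \<le> (norm f)\<^sup>2"
    using norm_residual_proj_span_sq[OF orthonormal finite_lessThan[of N], of f] by linarith
  moreover have "(head_norm_sq + 1) * (norm f)\<^sup>2 = head_norm_sq * (norm f)\<^sup>2 + (norm f)\<^sup>2"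
    by (simp add: algebra_simps)
  ultimately show ?thesis
    using sums_unique[OF analysis_sums[of f]] by linarith
qed

lemma riesz_basis_imp_coeff_injective:
  assumes "riesz_basis replaced" and "\<forall>k<N. (\<Sum>j<N. coeff_matrix k j * a j) = 0"
  shows "\<forall>j<N. a j = 0"
proof -
  obtain A where "0 < A" and lower: "\<And>F b. finite F \<Longrightarrow>
      A * (\<Sum>j\<in>F. (cmod (b j))\<^sup>2) \<le> (norm (\<Sum>j\<in>F. b j *\<^sub>C replaced j))\<^sup>2"
    using assms(1) unfolding riesz_basis_def by blast
  define y where "y = (\<Sum>j<N. a j *\<^sub>C x j)"
  have y_perp: "cinner (v k) y = 0" if "k < N" for k
    using assms(2) that
    by (simp add: y_def coeff_matrix_def cinner_sum_right cinner_scaleC_right mult.commute)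
  \<comment> \<open>The residual of y after K \<ge> N basis terms is a synthesis sum whose first N coefficients are a.\<close>
  have bound: "A * (\<Sum>j<N. (cmod (a j))\<^sup>2) \<le> (norm (y - proj_span v {..<K} y))\<^sup>2" if "N \<le> K" for K
  proof -
    define b where "b j = (if j < N then a j else - cinner (v j) y)" for j
    have split: "sum g {..<K} = sum g {..<N} + sum g {N..<K}" for g :: "nat \<Rightarrow> 'b::comm_monoid_add"
      using that by (simp add: lessThan_atLeast0 sum.atLeastLessThan_concat)
    have "(\<Sum>j<N. cinner (v j) y *\<^sub>C v j) = 0"
      using y_perp by simp
    then have "proj_span v {..<K} y = (\<Sum>j\<in>{N..<K}. cinner (v j) y *\<^sub>C v j)"
      by (simp add: proj_span_def split)
    moreover have "(\<Sum>j<N. b j *\<^sub>C replaced j) = y"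
      unfolding y_def by (intro sum.cong) (simp_all add: b_def replaced_def)
    moreover have "(\<Sum>j\<in>{N..<K}. b j *\<^sub>C replaced j) = - (\<Sum>j\<in>{N..<K}. cinner (v j) y *\<^sub>C v j)"
      unfolding sum_negf[symmetric]
      by (intro sum.cong) (simp_all add: b_def replaced_def scaleC_minus_left)
    ultimately have "(\<Sum>j<K. b j *\<^sub>C replaced j) = y - proj_span v {..<K} y"
      by (simp add: split)
    have "(\<Sum>j<N. (cmod (a j))\<^sup>2) = (\<Sum>j<N. (cmod (b j))\<^sup>2)"
      by (intro sum.cong) (simp_all add: b_def)
    also have "\<dots> \<le> (\<Sum>j<K. (cmod (b j))\<^sup>2)"
      using that by (intro sum_mono2) auto
    finally have "A * (\<Sum>j<N. (cmod (a j))\<^sup>2) \<le> A * (\<Sum>j<K. (cmod (b j))\<^sup>2)"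
      using \<open>0 < A\<close> by simp
    also have "\<dots> \<le> (norm (\<Sum>j<K. b j *\<^sub>C replaced j))\<^sup>2"
      by (rule lower) simp
    finally show ?thesis
      using \<open>(\<Sum>j<K. b j *\<^sub>C replaced j) = y - proj_span v {..<K} y\<close> by simp
  qed
  have lim: "(\<lambda>K. (norm (y - proj_span v {..<K} y))\<^sup>2) \<longlonglongrightarrow> 0"
    using tendsto_power[OF residual_proj_span_tendsto_zero[OF onb], where n = 2] by simp
  have "A * (\<Sum>j<N. (cmod (a j))\<^sup>2) \<le> 0"
    by (rule LIMSEQ_le_const[OF lim]) (use bound in blast)
  then have "(\<Sum>j<N. (cmod (a j))\<^sup>2) = 0"
    using \<open>0 < A\<close> by (simp add: mult_le_0_iff sum_nonneg order_antisym)
  then show ?thesis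
    by (simp add: sum_nonneg_eq_0_iff)
qed

end

locale onb_head_replacement_inverse = onb_head_replacement +
  fixes H :: "nat \<Rightarrow> nat \<Rightarrow> complex"
  assumes left_inverse: "\<forall>i<N. \<forall>j<N. (\<Sum>k<N. H i k * coeff_matrix k j) = (if i = j then 1 else 0)"
    and right_inverse: "\<forall>i<N. \<forall>j<N. (\<Sum>k<N. coeff_matrix i k * H k j) = (if i = j then 1 else 0)"
begin

definition inverse_frobenius_sq :: real where
  "inverse_frobenius_sq = (\<Sum>i<N. \<Sum>k<N. (cmod (H i k))\<^sup>2)"

definition inv_lower_bound :: real where
  "inv_lower_bound = 2 * inverse_frobenius_sq * (head_norm_sq + 1) + 2"

lemma inverse_frobenius_sq_nonneg: "0 \<le> inverse_frobenius_sq"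
  unfolding inverse_frobenius_sq_def by (simp add: sum_nonneg)

lemma inv_lower_bound_pos: "0 < inv_lower_bound"
  using mult_nonneg_nonneg[OF inverse_frobenius_sq_nonneg, of "head_norm_sq + 1"] head_norm_sq_nonneg
  by (simp add: inv_lower_bound_def)

lemma synthesis_lower_bound:
  assumes "finite F"
  shows "(\<Sum>j\<in>F. (cmod (a j))\<^sup>2) \<le> inv_lower_bound * (norm (\<Sum>j\<in>F. a j *\<^sub>C replaced j))\<^sup>2"
proof -
  obtain b z1 z2 where z: "(\<Sum>j\<in>F. a j *\<^sub>C replaced j) = z1 + z2"
    and sum_eq: "(\<Sum>j\<in>F. (cmod (a j))\<^sup>2) = (\<Sum>j<N. (cmod (b j))\<^sup>2) + (norm z2)\<^sup>2"
    and z1: "(norm z1)\<^sup>2 \<le> head_norm_sq * (\<Sum>j<N. (cmod (b j))\<^sup>2)"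
    and head: "\<And>k. k < N \<Longrightarrow> cinner (v k) (z1 + z2) = (\<Sum>j<N. coeff_matrix k j * b j)"
    using synthesis_decomposition[OF assms] by blast
  let ?K = inverse_frobenius_sq and ?C = head_norm_sq and ?\<alpha> = "\<Sum>j<N. (cmod (b j))\<^sup>2"
    and ?s = "(norm (z1 + z2))\<^sup>2"
  have "(\<Sum>k<N. (cmod (\<Sum>j<N. coeff_matrix k j * b j))\<^sup>2) = (\<Sum>k<N. (cmod (cinner (v k) (z1 + z2)))\<^sup>2)"
    by (intro sum.cong) (simp_all add: head)
  then have "?\<alpha> \<le> ?K * (\<Sum>k<N. (cmod (cinner (v k) (z1 + z2)))\<^sup>2)"
    using left_inverse_bounded_below[OF left_inverse, of b] by (simp add: inverse_frobenius_sq_def)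
  also have "\<dots> \<le> ?K * ?s"
    by (intro mult_left_mono bessel_inequality orthonormal inverse_frobenius_sq_nonneg) simp
  finally have \<alpha>_le: "?\<alpha> \<le> ?K * ?s" .
  have "(norm z2)\<^sup>2 \<le> 2 * ?s + 2 * (norm z1)\<^sup>2"
    using norm_diff_sq_le[of "z1 + z2" z1] by simp
  moreover have "?C * ?\<alpha> \<le> ?C * (?K * ?s)"
    using \<alpha>_le head_norm_sq_nonneg by (rule mult_left_mono)
  moreover have "inv_lower_bound * ?s = 2 * (?C * (?K * ?s)) + 2 * (?K * ?s) + 2 * ?s"
    by (simp add: inv_lower_bound_def algebra_simps)
  moreover have "0 \<le> ?K * ?s"
    using inverse_frobenius_sq_nonneg by simp
  ultimately show ?thesis
    using z1 \<alpha>_le unfolding z sum_eq by linarith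
qed

lemma analysis_lower_bound:
  "(norm f)\<^sup>2 \<le> inv_lower_bound * (\<Sum>j. (cmod (cinner f (replaced j)))\<^sup>2)"
proof -
  let ?K = inverse_frobenius_sq and ?C = head_norm_sq
  define c where "c k = cnj (cinner (v k) f)" for k
  define d where "d j = (\<Sum>k<N. coeff_matrix k j * c k)" for j
  define h where "h = f - proj_span v {..<N} f"
  define T where "T = (\<Sum>j<N. (cmod (cinner f (x j)))\<^sup>2)"
  define \<eta> where "\<eta> = (norm h)\<^sup>2"
  have norm_f: "(norm f)\<^sup>2 = (\<Sum>k<N. (cmod (c k))\<^sup>2) + \<eta>"
    using norm_residual_proj_span_sq[OF orthonormal, of "{..<N}" f] by (simp add: h_def \<eta>_def c_def)
  \<comment> \<open>d j = <p f, x j> for the projection p f, so the transpose of H recovers the first N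
    Fourier coefficients of f from d.\<close>
  have "\<forall>i<N. \<forall>j<N. (\<Sum>k<N. H k i * coeff_matrix j k) = (if i = j then 1 else 0)"
    using right_inverse by (auto simp: mult.commute)
  from left_inverse_bounded_below[OF this, of c]
  have "(\<Sum>k<N. (cmod (c k))\<^sup>2) \<le> (\<Sum>i<N. \<Sum>k<N. (cmod (H k i))\<^sup>2) * (\<Sum>j<N. (cmod (d j))\<^sup>2)"
    by (simp add: d_def)
  also have "(\<Sum>i<N. \<Sum>k<N. (cmod (H k i))\<^sup>2) = ?K"
    unfolding inverse_frobenius_sq_def by (rule sum.swap)
  finally have P_le: "(\<Sum>k<N. (cmod (c k))\<^sup>2) \<le> ?K * (\<Sum>j<N. (cmod (d j))\<^sup>2)" .
  have "(cmod (d j))\<^sup>2 \<le> 2 * (cmod (cinner f (x j)))\<^sup>2 + 2 * (\<eta> * (norm (x j))\<^sup>2)" for j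
  proof -
    have "d j = cinner (proj_span v {..<N} f) (x j)"
      by (simp add: d_def c_def proj_span_def coeff_matrix_def cinner_sum_left cinner_scaleC_left
          mult.commute)
    then have "d j = cinner f (x j) - cinner h (x j)"
      by (simp add: h_def cinner_diff_left)
    then have "(cmod (d j))\<^sup>2 \<le> 2 * (cmod (cinner f (x j)))\<^sup>2 + 2 * (cmod (cinner h (x j)))\<^sup>2"
      using norm_diff_sq_le[of "cinner f (x j)" "cinner h (x j)"] by simp
    then show ?thesis
      using cauchy_schwarz_cinner_sq[of h "x j"] by (simp add: \<eta>_def)
  qed
  then have "(\<Sum>j<N. (cmod (d j))\<^sup>2) \<le> (\<Sum>j<N. 2 * (cmod (cinner f (x j)))\<^sup>2 + 2 * (\<eta> * (norm (x j))\<^sup>2))"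
    by (intro sum_mono)
  also have "\<dots> = 2 * T + 2 * (?C * \<eta>)"
    by (simp add: T_def head_norm_sq_def sum.distrib sum_distrib_left sum_distrib_right mult.commute)
  finally have "?K * (\<Sum>j<N. (cmod (d j))\<^sup>2) \<le> ?K * (2 * T + 2 * (?C * \<eta>))"
    using inverse_frobenius_sq_nonneg by (rule mult_left_mono)
  moreover have "?K * (2 * T + 2 * (?C * \<eta>)) = 2 * (?K * T) + 2 * (?K * (?C * \<eta>))"
    by (simp add: algebra_simps)
  moreover have "inv_lower_bound * (T + \<eta>)
      = 2 * (?K * (?C * T)) + 2 * (?K * T) + 2 * T + 2 * (?K * (?C * \<eta>)) + 2 * (?K * \<eta>) + 2 * \<eta>"
    by (simp add: inv_lower_bound_def algebra_simps)
  moreover have "0 \<le> ?K * (?C * T)" "0 \<le> T" "0 \<le> ?K * \<eta>" "0 \<le> \<eta>"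
    using inverse_frobenius_sq_nonneg head_norm_sq_nonneg by (simp_all add: T_def \<eta>_def sum_nonneg)
  ultimately have "(norm f)\<^sup>2 \<le> inv_lower_bound * (T + \<eta>)"
    using norm_f P_le by linarith
  then show ?thesis
    using sums_unique[OF analysis_sums[of f]] by (simp add: T_def \<eta>_def h_def)
qed

lemma riesz_basis_replaced: "riesz_basis replaced"
proof (rule riesz_basisI[OF inv_lower_bound_pos])
  show "summable (\<lambda>j. (cmod (cinner f (replaced j)))\<^sup>2)" for f
    using analysis_sums by (rule sums_summable)
  show "(\<Sum>j. (cmod (cinner f (replaced j)))\<^sup>2) \<le> 2 * (head_norm_sq + 1) * (norm f)\<^sup>2" for f
  proof -
    have "0 \<le> (head_norm_sq + 1) * (norm f)\<^sup>2"
      using head_norm_sq_nonneg by simp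
    then show ?thesis
      using analysis_upper_bound[of f] by linarith
  qed
qed (use analysis_lower_bound synthesis_lower_bound synthesis_upper_bound in auto)

end
context onb_head_replacement
begin

lemma riesz_basis_replaced_iff:
  "riesz_basis replaced \<longleftrightarrow> (\<forall>a. (\<forall>k<N. (\<Sum>j<N. coeff_matrix k j * a j) = 0) \<longrightarrow> (\<forall>j<N. a j = 0))"
proof
  assume "riesz_basis replaced"
  then show "\<forall>a. (\<forall>k<N. (\<Sum>j<N. coeff_matrix k j * a j) = 0) \<longrightarrow> (\<forall>j<N. a j = 0)"
    using riesz_basis_imp_coeff_injective by blast
next
  assume "\<forall>a. (\<forall>k<N. (\<Sum>j<N. coeff_matrix k j * a j) = 0) \<longrightarrow> (\<forall>j<N. a j = 0)"
  then obtain H where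
    "\<forall>i<N. \<forall>j<N. (\<Sum>k<N. H i k * coeff_matrix k j) = (if i = j then 1 else 0)"
    "\<forall>i<N. \<forall>j<N. (\<Sum>k<N. coeff_matrix i k * H k j) = (if i = j then 1 else 0)"
    using square_matrix_inverse_exists[of N coeff_matrix] by blast
  then interpret onb_head_replacement_inverse v x N H
    by unfold_locales
  show "riesz_basis replaced"
    by (rule riesz_basis_replaced)
qed

end

theorem mainTheorem4:
  fixes v w :: "nat \<Rightarrow> 'a::chilbert_space" and N :: nat
  assumes "orthonormal_basis v"
    and "\<And>j. norm (w j) = 1"
    and "N \<ge> 1"
  shows "riesz_basis (\<lambda>j. if j < N then w j else v j) \<longleftrightarrow>
         riesz_basis (\<lambda>j. if j < N then orth_proj (cspan (v ` {..<N})) (w j) else v j)"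
proof -
  interpret W: onb_head_replacement v w N
    by unfold_locales (rule assms(1))
  interpret P: onb_head_replacement v "\<lambda>j. proj_span v {..<N} (w j)" N
    by unfold_locales (rule assms(1))
  have "orth_proj (cspan (v ` {..<N})) (w j) = proj_span v {..<N} (w j)" for j
    by (rule orth_proj_eq_proj_span[OF W.orthonormal finite_lessThan])
  then have "W.replaced = (\<lambda>j. if j < N then w j else v j)"
    and "P.replaced = (\<lambda>j. if j < N then orth_proj (cspan (v ` {..<N})) (w j) else v j)"
    by (simp_all add: fun_eq_iff W.replaced_def P.replaced_def)
  moreover have "P.coeff_matrix k j = W.coeff_matrix k j" if "k < N" for k j
    using that by (simp add: P.coeff_matrix_def W.coeff_matrix_def cinner_proj_span[OF W.orthonormal])
  ultimately show ?thesis
    using W.riesz_basis_replaced_iff P.riesz_basis_replaced_iff by simp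
qed

end
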